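(* For all $n\ge0$, \[ p_n^2=\delta_{n,0}+p_{n-2}^2+p_{n-3}^2+2\sum_{l=5}^n c_{l-5}p_{n-l}^2 . \]
   Context: The Narayana's cows numbers $c_n$ are defined by $c_n=\delta_{n,0}+c_{n-1}+c_{n-3}$ for $n\ge0$, $c_n=0$ for $n<0$. The Padovan numbers $p_n$ are defined by $p_n=\delta_{n,0}+p_{n-2}+p_{n-3}$ for $n\ge0$, $p_n=0$ for $n<0$. $\delta_{i,j}$ is $1$ if $i=j$ and $0$ otherwise. Empty sums are $0$. *)

theory Defs
  imports Main
begin

function cows :: "int \<Rightarrow> int" where
  "cows n = (if n < 0 then 0 else (if n = 0 then 1 else 0) + cows (n - 1) + cows (n - 3))"
  by auto
termination by (relation "measure (\<lambda>n. nat (n + 1))") auto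

function padovan :: "int \<Rightarrow> int" where
  "padovan n = (if n < 0 then 0 else (if n = 0 then 1 else 0) + padovan (n - 2) + padovan (n - 3))"
  by auto
termination by (relation "measure (\<lambda>n. nat (n + 1))") auto

declare cows.simps[simp del] padovan.simps[simp del]

end

theory Submission
  imports Defs
begin

(* For n > 0 we have p(n)^2 = (p(n-2) + p(n-3))^2, so the theorem amounts to
   p(n-2) p(n-3) = sum_l c(l-5) p(n-l)^2.  The cows numbers are the coefficients of
   1/(1 - x - x^3), so convolution with them gives the unique solution g of
   g(k) = f(k) + g(k-1) + g(k-3) that vanishes for k < 0.  Expanding both factors by the
   Padovan recurrence shows that g(k) = p(k+3) p(k+2) solves it with f(k) = p(k)^2. *)

lemma cows_neg: "n < 0 \<Longrightarrow> cows n = 0"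
  by (subst cows.simps) simp

lemma cows_rec: "n \<ge> 0 \<Longrightarrow> cows n = (if n = 0 then 1 else 0) + cows (n - 1) + cows (n - 3)"
  by (subst cows.simps) simp

lemma padovan_neg: "n < 0 \<Longrightarrow> padovan n = 0"
  by (subst padovan.simps) simp

lemma padovan_0: "padovan 0 = 1"
  by (subst padovan.simps) (simp add: padovan_neg)

lemma padovan_rec: "n > 0 \<Longrightarrow> padovan n = padovan (n - 2) + padovan (n - 3)"
  by (subst padovan.simps) simp

definition cows_conv :: "(int \<Rightarrow> int) \<Rightarrow> int \<Rightarrow> int" where
  "cows_conv f k = (\<Sum>j\<in>{0..k}. cows j * f (k - j))"

lemma cows_conv_neg: "k < 0 \<Longrightarrow> cows_conv f k = 0"
  unfolding cows_conv_def by simp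

lemma cows_conv_shift:
  "(\<Sum>j\<in>{d..k}. cows (j - d) * f (k - j)) = cows_conv f (k - d)"
proof -
  have "(\<Sum>j\<in>{d..k}. cows (j - d) * f (k - j))
      = (\<Sum>j\<in>(\<lambda>i. i + d) ` {0..k - d}. cows (j - d) * f (k - j))"
    by simp
  also have "\<dots> = cows_conv f (k - d)"
    unfolding cows_conv_def by (subst sum.reindex) (auto simp: inj_on_def algebra_simps)
  finally show ?thesis .
qed

lemma cows_conv_shift_from_0:
  assumes "d \<ge> 0"
  shows "(\<Sum>j\<in>{0..k}. cows (j - d) * f (k - j)) = cows_conv f (k - d)"
proof -
  have "(\<Sum>j\<in>{0..k}. cows (j - d) * f (k - j)) = (\<Sum>j\<in>{d..k}. cows (j - d) * f (k - j))"
    by (rule sum.mono_neutral_right) (use assms in \<open>auto simp: cows_neg\<close>)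
  then show ?thesis
    by (simp add: cows_conv_shift)
qed

lemma cows_conv_rec:
  assumes "k \<ge> 0"
  shows "cows_conv f k = f k + cows_conv f (k - 1) + cows_conv f (k - 3)"
proof -
  have "cows_conv f k = (\<Sum>j\<in>{0..k}. (if j = 0 then f (k - j) else 0))
      + (\<Sum>j\<in>{0..k}. cows (j - 1) * f (k - j)) + (\<Sum>j\<in>{0..k}. cows (j - 3) * f (k - j))"
    unfolding cows_conv_def sum.distrib[symmetric]
    by (rule sum.cong) (auto simp: cows_rec algebra_simps)
  then show ?thesis
    using assms by (simp add: cows_conv_shift_from_0)
qed

lemma cows_conv_unique:
  assumes "\<And>k. k < 0 \<Longrightarrow> g k = 0"
    and "\<And>k. k \<ge> 0 \<Longrightarrow> g k = f k + g (k - 1) + g (k - 3)"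
  shows "g k = cows_conv f k"
proof (induction "nat (k + 1)" arbitrary: k rule: less_induct)
  case less
  show ?case
  proof (cases "k < 0")
    case True
    then show ?thesis
      by (simp add: assms(1) cows_conv_neg)
  next
    case False
    then have "g k = f k + g (k - 1) + g (k - 3)"
      by (simp add: assms(2))
    also have "\<dots> = f k + cows_conv f (k - 1) + cows_conv f (k - 3)"
      using False less by simp
    also have "\<dots> = cows_conv f k"
      using False by (simp add: cows_conv_rec)
    finally show ?thesis .
  qed
qed

lemma padovan_mult_pred:
  "padovan m * padovan (m - 1) = cows_conv (\<lambda>k. (padovan k)\<^sup>2) (m - 3)"
proof -
  let ?q = "\<lambda>k. padovan (k + 3) * padovan (k + 2)"
  have "?q k = 0" if "k < 0" for k
  proof -
    have "padovan 1 = 0"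
      by (simp add: padovan_rec padovan_neg)
    moreover have "k = -1 \<or> k = -2 \<or> k + 2 < 0"
      using that by arith
    ultimately show ?thesis
      by (auto simp: padovan_neg)
  qed
  moreover have "?q k = (padovan k)\<^sup>2 + ?q (k - 1) + ?q (k - 3)" if "k \<ge> 0" for k
    using that padovan_rec[of "k + 3"] padovan_rec[of "k + 2"] padovan_rec[of "k + 1"]
    by (simp add: algebra_simps power2_eq_square)
  ultimately have "?q (m - 3) = cows_conv (\<lambda>k. (padovan k)\<^sup>2) (m - 3)"
    by (rule cows_conv_unique)
  then show ?thesis
    by simp
qed

theorem mainTheorem13:
  fixes n :: int
  assumes "n \<ge> 0"
  shows "(padovan n)^2 = (if n = 0 then 1 else 0) + (padovan (n - 2))^2 + (padovan (n - 3))^2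
           + 2 * (\<Sum>l\<in>{5..n}. cows (l - 5) * (padovan (n - l))^2)"
proof (cases "n = 0")
  case True
  then show ?thesis
    by (simp add: padovan_0 padovan_neg)
next
  case False
  have "(\<Sum>l\<in>{5..n}. cows (l - 5) * (padovan (n - l))\<^sup>2) = padovan (n - 2) * padovan (n - 3)"
    using cows_conv_shift padovan_mult_pred[of "n - 2"] by simp
  moreover have "padovan n = padovan (n - 2) + padovan (n - 3)"
    using assms False by (simp add: padovan_rec)
  ultimately show ?thesis
    using False by (simp add: power2_eq_square algebra_simps)
qed

end
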